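(* Let $q\ge 1$ and let $\chi$ be a probability distribution on $[q]=\{1,\dots,q\}$, with $p_k$ the probability of the element $k$. For each $k$, let $\chi/k$ be the distribution on the $q-1$ elements $[q]\setminus\{k\}$ obtained by removing $k$ and renormalizing the remaining probabilities. Then for every integer $m\ge 1$, \[P_{\chi}(m,q)=P_{\chi}(m-1,q)+\sum_{k=1}^q p_k(1-p_k)^{m-1}\, P_{\chi/k}(m-1,q-1).\]
   Context: For a distribution $\chi$ on a finite set of size $q$, $P_\chi(m,q)$ denotes the probability that $m$ independent samples drawn from $\chi$ "smear", i.e. every element of the set is drawn at least once. Conventions for degenerate cases: $P_\chi(m,0)=1$ for all $m\ge 0$ (the empty set is always covered), $P_\chi(0,q)=0$ for $q\ge1$; if $p_k=1$, then $\chi/k$ may be taken to be any distribution on $[q]\setminus\{k\}$. *)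

theory Defs
  imports Complex_Main
begin

text \<open>Probability that m independent samples from the distribution with point
  probabilities p (on the finite set A) cover every element of A. Convention: the empty set is always covered.\<close>
definition smear_prob :: "('a \<Rightarrow> real) \<Rightarrow> 'a set \<Rightarrow> nat \<Rightarrow> real" where
  "smear_prob p A m =
     (if A = {} then 1
      else (\<Sum>xs\<in>{xs. set xs \<subseteq> A \<and> length xs = m}.
              if set xs = A then prod_list (map p xs) else 0))"

end

theory Submission imports Defs begin

(* Split a sample sequence into its first sample x and the rest. The remaining m - 1 samples
   cover either all of [q] or exactly [q] - {x}. The first alternative contributes P(m - 1),
   since the p x sum to 1. In the second, p = (1 - p x) * (chi/x) on [q] - {x} (when p x = 1
   because p vanishes there), so the weight of the sequences covering exactly [q] - {x} is
   (1 - p x)^(m-1) * P_(chi/x)(m - 1, q - 1). *)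

(* Total weight of the words of length n with image exactly A. Unlike smear_prob it is not
   normalised at A = {}: there it is 1 for n = 0 and 0 otherwise. *)
definition cover_weight :: "('a \<Rightarrow> 'b::comm_semiring_1) \<Rightarrow> 'a set \<Rightarrow> nat \<Rightarrow> 'b" where
  "cover_weight p A n = (\<Sum>xs | set xs = A \<and> length xs = n. prod_list (map p xs))"

lemma sum_lists_length_Suc:
  assumes "finite A"
  shows "(\<Sum>xs | set xs \<subseteq> A \<and> length xs = Suc n. f xs)
       = (\<Sum>x\<in>A. \<Sum>ys | set ys \<subseteq> A \<and> length ys = n. f (x # ys))"
proof -
  let ?L = "{ys. set ys \<subseteq> A \<and> length ys = n}"
  have "{xs. set xs \<subseteq> A \<and> length xs = Suc n} = (\<lambda>(x, ys). x # ys) ` (A \<times> ?L)"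
    by (auto simp: length_Suc_conv image_iff)
  moreover have "inj_on (\<lambda>(x, ys). x # ys) (A \<times> ?L)"
    by (auto simp: inj_on_def)
  ultimately have "(\<Sum>xs | set xs \<subseteq> A \<and> length xs = Suc n. f xs) = (\<Sum>(x, ys)\<in>A \<times> ?L. f (x # ys))"
    by (simp add: sum.reindex case_prod_unfold)
  then show ?thesis
    by (simp add: sum.cartesian_product)
qed

lemma cover_weight_eq_sum_lists:
  assumes "finite B" "A \<subseteq> B"
  shows "cover_weight p A n
       = (\<Sum>xs | set xs \<subseteq> B \<and> length xs = n. if set xs = A then prod_list (map p xs) else 0)"
proof -
  have "{xs. set xs = A \<and> length xs = n} = {xs \<in> {xs. set xs \<subseteq> B \<and> length xs = n}. set xs = A}"
    using assms(2) by auto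
  then show ?thesis
    unfolding cover_weight_def by (simp only: sum.inter_filter finite_lists_length_eq[OF assms(1)])
qed

lemma cover_weight_Suc:
  assumes "finite A"
  shows "cover_weight p A (Suc n) = sum p A * cover_weight p A n + (\<Sum>x\<in>A. p x * cover_weight p (A - {x}) n)"
proof -
  let ?w = "\<lambda>B ys. if set ys = B then prod_list (map p ys) else 0"
  have first_letter: "?w A (x # ys) = p x * ?w A ys + p x * ?w (A - {x}) ys"
    if "x \<in> A" "set ys \<subseteq> A" for x ys
    using that by (auto simp: insert_absorb)
  have "cover_weight p A (Suc n) = (\<Sum>x\<in>A. \<Sum>ys | set ys \<subseteq> A \<and> length ys = n. ?w A (x # ys))"
    using assms by (simp add: cover_weight_eq_sum_lists sum_lists_length_Suc)
  also have "\<dots> = (\<Sum>x\<in>A. \<Sum>ys | set ys \<subseteq> A \<and> length ys = n. p x * ?w A ys + p x * ?w (A - {x}) ys)"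
    by (intro sum.cong refl first_letter) auto
  also have "\<dots> = (\<Sum>x\<in>A. p x * (\<Sum>ys | set ys \<subseteq> A \<and> length ys = n. ?w A ys)
                        + p x * (\<Sum>ys | set ys \<subseteq> A \<and> length ys = n. ?w (A - {x}) ys))"
    by (simp add: sum.distrib sum_distrib_left)
  also have "\<dots> = (\<Sum>x\<in>A. p x * cover_weight p A n + p x * cover_weight p (A - {x}) n)"
    using assms by (simp add: cover_weight_eq_sum_lists[of A])
  finally show ?thesis
    by (simp add: sum.distrib sum_distrib_right)
qed

lemma cover_weight_cong:
  "(\<And>x. x \<in> A \<Longrightarrow> p x = p' x) \<Longrightarrow> cover_weight p A n = cover_weight p' A n"
  unfolding cover_weight_def by (intro sum.cong refl arg_cong[where f = prod_list]) auto

lemma cover_weight_scale: "cover_weight (\<lambda>x. c * p x) A n = c ^ n * cover_weight p A n"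
proof -
  have "prod_list (map (\<lambda>x. c * p x) xs) = c ^ length xs * prod_list (map p xs)" for xs
    by (induction xs) (simp_all add: ac_simps)
  then show ?thesis
    unfolding cover_weight_def by (simp add: sum_distrib_left)
qed

lemma cover_weight_empty: "cover_weight p {} n = (if n = 0 then 1 else 0)"
proof -
  have words: "{xs. set xs = {} \<and> length xs = n} = (if n = 0 then {[]} else {})"
    by auto
  show ?thesis
    unfolding cover_weight_def words by simp
qed

lemma smear_prob_eq_cover_weight:
  "finite A \<Longrightarrow> A \<noteq> {} \<Longrightarrow> smear_prob p A n = cover_weight p A n"
  unfolding smear_prob_def by (simp add: cover_weight_eq_sum_lists)

lemma smear_prob_Suc:
  fixes p :: "'a \<Rightarrow> real" and d :: "'a \<Rightarrow> 'a \<Rightarrow> real"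
  assumes "finite A" "A \<noteq> {}" "sum p A = 1"
    and conditional: "\<And>k x. k \<in> A \<Longrightarrow> x \<in> A - {k} \<Longrightarrow> p x = (1 - p k) * d k x"
  shows "smear_prob p A (Suc n)
       = smear_prob p A n + (\<Sum>k\<in>A. p k * (1 - p k) ^ n * smear_prob (d k) (A - {k}) n)"
proof -
  have avoiding: "p k * cover_weight p (A - {k}) n = p k * (1 - p k) ^ n * smear_prob (d k) (A - {k}) n"
    if "k \<in> A" for k
  proof (cases "A - {k} = {}")
    case True
    with \<open>k \<in> A\<close> have "A = {k}"
      by auto
    with \<open>sum p A = 1\<close> have "p k = 1"
      by simp
    then show ?thesis
      unfolding True by (simp add: cover_weight_empty smear_prob_def power_0_left)
  next
    case False
    have "cover_weight p (A - {k}) n = cover_weight (\<lambda>x. (1 - p k) * d k x) (A - {k}) n"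
      using conditional[OF that] by (intro cover_weight_cong) simp
    also have "\<dots> = (1 - p k) ^ n * smear_prob (d k) (A - {k}) n"
      using \<open>finite A\<close> False by (simp add: cover_weight_scale smear_prob_eq_cover_weight)
    finally show ?thesis
      by simp
  qed
  have "smear_prob p A (Suc n) = sum p A * cover_weight p A n + (\<Sum>k\<in>A. p k * cover_weight p (A - {k}) n)"
    using assms(1,2) by (simp add: smear_prob_eq_cover_weight cover_weight_Suc)
  then show ?thesis
    using assms(1-3) avoiding by (simp add: smear_prob_eq_cover_weight)
qed

lemma sum_eq_term_imp_others_zero:
  fixes p :: "'a \<Rightarrow> 'b::ordered_cancel_comm_monoid_add"
  assumes "finite A" "\<And>x. x \<in> A \<Longrightarrow> 0 \<le> p x" "k \<in> A" "sum p A = p k" "x \<in> A - {k}"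
  shows "p x = 0"
proof -
  have "p k + sum p (A - {k}) = p k"
    using assms(1,3,4) by (simp add: sum.remove)
  then have "sum p (A - {k}) = 0"
    by (metis add.right_neutral add_left_cancel)
  then show ?thesis
    using sum_nonneg_eq_0_iff[of "A - {k}" p] assms by blast
qed

theorem mainTheorem3:
  fixes q m :: nat and p :: "nat \<Rightarrow> real" and d :: "nat \<Rightarrow> nat \<Rightarrow> real"
  assumes "q \<ge> 1"
    and "\<forall>k\<in>{1..q}. p k \<ge> 0"
    and "(\<Sum>k=1..q. p k) = 1"
    and "\<forall>k\<in>{1..q}. p k \<noteq> 1 \<longrightarrow> (\<forall>x\<in>{1..q} - {k}. d k x = p x / (1 - p k))"
    and "\<forall>k\<in>{1..q}. p k = 1 \<longrightarrow>
           (\<forall>x\<in>{1..q} - {k}. d k x \<ge> 0) \<and>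
           ({1..q} - {k} \<noteq> {} \<longrightarrow> (\<Sum>x\<in>{1..q} - {k}. d k x) = 1)"
    and "m \<ge> 1"
  shows "smear_prob p {1..q} m =
           smear_prob p {1..q} (m - 1)
           + (\<Sum>k=1..q. p k * (1 - p k) ^ (m - 1) * smear_prob (d k) ({1..q} - {k}) (m - 1))"
proof -
  have conditional: "p x = (1 - p k) * d k x" if "k \<in> {1..q}" "x \<in> {1..q} - {k}" for k x
  proof (cases "p k = 1")
    case True
    then have "p x = 0"
      using sum_eq_term_imp_others_zero[of "{1..q}" p k x] assms(2,3) that by simp
    with True show ?thesis
      by simp
  next
    case False
    with assms(4) that show ?thesis
      by simp
  qed
  obtain n where "m = Suc n"
    using assms(6) by (cases m) auto
  then show ?thesis
    using smear_prob_Suc[of "{1..q}" p d n] assms(1,3) conditional by simp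
qed

end
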